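(* Let $P$ be a set of $n\geq 5$ points in general position in the plane. Then $\operatorname{diam}(D(P))\in\{2,3,4\}$ if $n=5$, $\operatorname{diam}(D(P))\in\{2,3\}$ if $n\in\{6,7,8\}$, and $\operatorname{diam}(D(P))=2$ if $n\geq 9$.
   Context: A set of points in the plane is in general position if no three of its points are collinear. The disjointness graph of segments $D(P)$ of $P$ is the graph whose vertices are all $\binom{n}{2}$ closed straight-line segments with both endpoints in $P$, two such segments being adjacent if and only if they are disjoint. The diameter $\operatorname{diam}(G)$ of a connected graph $G$ is the largest distance (length of a shortest path) between two vertices of $G$. *)

theory Defs
  imports "HOL-Analysis.Analysis"
begin

definition general_position :: "(real^2) set \<Rightarrow> bool" where
  "general_position P \<longleftrightarrow>
     (\<forall>a\<in>P. \<forall>b\<in>P. \<forall>c\<in>P. a \<noteq> b \<and> a \<noteq> c \<and> b \<noteq> c \<longrightarrow> \<not> collinear {a, b, c})"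

text \<open>A vertex of D(P) is a segment with both endpoints in P, represented by its
  (unordered) pair of endpoints {a,b}; the closed segment itself is closed_segment a b.\<close>

definition seg_vertices :: "(real^2) set \<Rightarrow> (real^2) set set" where
  "seg_vertices P = {{a, b} | a b. a \<in> P \<and> b \<in> P \<and> a \<noteq> b}"

definition seg_of :: "(real^2) set \<Rightarrow> (real^2) set" where
  "seg_of e = closed_segment (SOME a. a \<in> e) (SOME b. b \<in> e \<and> b \<noteq> (SOME a. a \<in> e))"

definition disj_adj :: "(real^2) set \<Rightarrow> (real^2) set \<Rightarrow> (real^2) set \<Rightarrow> bool" where
  "disj_adj P e f \<longleftrightarrow> e \<in> seg_vertices P \<and> f \<in> seg_vertices P \<and> seg_of e \<inter> seg_of f = {}"

definition is_walk :: "'v set \<Rightarrow> ('v \<Rightarrow> 'v \<Rightarrow> bool) \<Rightarrow> 'v list \<Rightarrow> bool" where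
  "is_walk V E xs \<longleftrightarrow> xs \<noteq> [] \<and> set xs \<subseteq> V \<and> (\<forall>i. Suc i < length xs \<longrightarrow> E (xs ! i) (xs ! Suc i))"

definition walk_of_len :: "'v set \<Rightarrow> ('v \<Rightarrow> 'v \<Rightarrow> bool) \<Rightarrow> 'v \<Rightarrow> 'v \<Rightarrow> nat \<Rightarrow> bool" where
  "walk_of_len V E u v k \<longleftrightarrow>
     (\<exists>xs. is_walk V E xs \<and> hd xs = u \<and> last xs = v \<and> length xs = Suc k)"

definition graph_connected :: "'v set \<Rightarrow> ('v \<Rightarrow> 'v \<Rightarrow> bool) \<Rightarrow> bool" where
  "graph_connected V E \<longleftrightarrow> (\<forall>u\<in>V. \<forall>v\<in>V. \<exists>k. walk_of_len V E u v k)"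

definition graph_dist :: "'v set \<Rightarrow> ('v \<Rightarrow> 'v \<Rightarrow> bool) \<Rightarrow> 'v \<Rightarrow> 'v \<Rightarrow> nat" where
  "graph_dist V E u v = (LEAST k. walk_of_len V E u v k)"

definition graph_diam :: "'v set \<Rightarrow> ('v \<Rightarrow> 'v \<Rightarrow> bool) \<Rightarrow> nat" where
  "graph_diam V E = Max {graph_dist V E u v | u v. u \<in> V \<and> v \<in> V}"

abbreviation diam_D :: "(real^2) set \<Rightarrow> nat" where
  "diam_D P \<equiv> graph_diam (seg_vertices P) (disj_adj P)"

end

theory Submission
  imports Defs
begin

(* Two segments of P that are not disjoint either share an endpoint or cross; let E and F be
   the lines through them.  By general position every other point of P lies in one of the four
   open quadrants cut out by E and F, and a segment lying in a closed half-plane of E (or F) is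
   disjoint from every segment lying in the opposite open half-plane.  This gives explicit short
   paths in D(P): of length 4 through one further point, of length 3 through two further points
   (for a shared endpoint three are needed, as two points in opposite quadrants only give
   length 4), and of length 2 through the segment joining two further points in the same
   quadrant, which exist by pigeonhole once n >= 9.  Segments with a common endpoint are never
   adjacent, so the diameter is at least 2. *)

definition affine_fun :: "('a::real_vector \<Rightarrow> real) \<Rightarrow> bool" where
  "affine_fun L \<longleftrightarrow> (\<forall>p q u. L ((1 - u) *\<^sub>R p + u *\<^sub>R q) = (1 - u) * L p + u * L q)"

lemma affine_fun_scale: "affine_fun L \<Longrightarrow> affine_fun (\<lambda>z. c * L z)"
  unfolding affine_fun_def by (simp add: distrib_left mult.left_commute)

lemma affine_fun_image_closed_segment:
  assumes "affine_fun L"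
  shows "L ` closed_segment p q = closed_segment (L p) (L q)"
  using assms unfolding affine_fun_def closed_segment_def by (auto simp: image_iff) force

definition separates :: "('a \<Rightarrow> real) \<Rightarrow> 'a \<Rightarrow> 'a \<Rightarrow> 'a \<Rightarrow> 'a \<Rightarrow> bool" where
  "separates L p q r s \<longleftrightarrow>
     (L p \<le> 0 \<and> L q \<le> 0 \<and> L r > 0 \<and> L s > 0) \<or> (L p \<ge> 0 \<and> L q \<ge> 0 \<and> L r < 0 \<and> L s < 0) \<or>
     (L r \<le> 0 \<and> L s \<le> 0 \<and> L p > 0 \<and> L q > 0) \<or> (L r \<ge> 0 \<and> L s \<ge> 0 \<and> L p < 0 \<and> L q < 0)"

lemma closed_segments_disjoint_if_separates:
  assumes "affine_fun L" "separates L p q r s"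
  shows "closed_segment p q \<inter> closed_segment r s = {}"
proof -
  have "closed_segment (L p) (L q) \<inter> closed_segment (L r) (L s) = {}"
    using assms(2) unfolding separates_def by (auto simp: closed_segment_eq_real_ivl)
  then show ?thesis
    using affine_fun_image_closed_segment[OF assms(1)] by blast
qed

definition orient :: "real^2 \<Rightarrow> real^2 \<Rightarrow> real^2 \<Rightarrow> real" where
  "orient a b c = (b$1 - a$1) * (c$2 - a$2) - (b$2 - a$2) * (c$1 - a$1)"

lemma affine_fun_orient: "affine_fun (orient a b)"
  unfolding affine_fun_def orient_def by (simp add: algebra_simps)

lemma orient_self [simp]: "orient a b a = 0" "orient a b b = 0"
  unfolding orient_def by simp_all

lemma collinear_if_orient_eq_0:
  assumes "orient a b c = 0"
  shows "collinear {a, b, c}"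
proof (cases "a = b")
  case True
  then show ?thesis by simp
next
  case False
  let ?u = "b - a" and ?w = "c - a"
  have "?u$1 \<noteq> 0 \<or> ?u$2 \<noteq> 0"
    using False by (auto simp: vec_eq_iff forall_2)
  then have "?w = (if ?u$1 = 0 then ?w$2 / ?u$2 else ?w$1 / ?u$1) *\<^sub>R ?u"
    using assms by (auto simp: orient_def vec_eq_iff forall_2 field_simps)
  then have "collinear {0, ?u, ?w}"
    unfolding collinear_lemma by blast
  then show ?thesis
    using collinear_3[of b a c] by (simp add: insert_commute)
qed

lemma orient_neq_0_if_general_position:
  assumes "general_position P" "a \<in> P" "b \<in> P" "c \<in> P" "distinct [a, b, c]"
  shows "orient a b c \<noteq> 0"
  using assms collinear_if_orient_eq_0 unfolding general_position_def by (simp; blast)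

definition side :: "real^2 \<Rightarrow> real^2 \<Rightarrow> real^2 \<Rightarrow> real^2 \<Rightarrow> real" where
  "side a b c z = sgn (orient a b c) * orient a b z"

lemma affine_fun_side: "affine_fun (side a b c)"
  unfolding side_def by (intro affine_fun_scale affine_fun_orient)

lemma side_self [simp]: "side a b c a = 0" "side a b c b = 0"
  unfolding side_def by simp_all

lemma side_pos: "orient a b c \<noteq> 0 \<Longrightarrow> side a b c c > 0"
  unfolding side_def by (simp add: sgn_real_def)

lemma side_eq_0_iff: "side a b c z = 0 \<longleftrightarrow> orient a b c = 0 \<or> orient a b z = 0"
  unfolding side_def by (simp add: sgn_eq_0_iff)

lemma side_pos_if_general_position:
  assumes "general_position P" "{a, b, c} \<subseteq> P" "distinct [a, b, c]"
  shows "side a b c c > 0"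
  using assms orient_neq_0_if_general_position side_pos by simp

lemma side_neq_0_if_general_position:
  assumes "general_position P" "{a, b, c, z} \<subseteq> P" "distinct [a, b, c]" "distinct [a, b, z]"
  shows "side a b c z \<noteq> 0"
  using assms orient_neq_0_if_general_position by (simp add: side_eq_0_iff)

lemma is_walk_singleton [simp]: "is_walk V E [x] \<longleftrightarrow> x \<in> V"
  unfolding is_walk_def by simp

lemma is_walk_Cons_Cons:
  "is_walk V E (x # y # xs) \<longleftrightarrow> x \<in> V \<and> E x y \<and> is_walk V E (y # xs)"
  unfolding is_walk_def by (auto simp: All_less_Suc2)

text \<open>A bound on graph_dist (a LEAST) carries no information unless some walk exists,
  so distance bounds are stated through the existence of a short walk.\<close>

definition reachable_within :: "'v set \<Rightarrow> ('v \<Rightarrow> 'v \<Rightarrow> bool) \<Rightarrow> nat \<Rightarrow> 'v \<Rightarrow> 'v \<Rightarrow> bool" where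
  "reachable_within V E k u v \<longleftrightarrow> (\<exists>j\<le>k. walk_of_len V E u v j)"

lemma reachable_within_mono:
  "reachable_within V E k u v \<Longrightarrow> k \<le> k' \<Longrightarrow> reachable_within V E k' u v"
  unfolding reachable_within_def using order_trans by blast

lemma reachable_within_walk:
  assumes "is_walk V E xs" "hd xs = u" "last xs = v" "length xs \<le> Suc k"
  shows "reachable_within V E k u v"
  using assms unfolding reachable_within_def walk_of_len_def is_walk_def
  by (intro exI[of _ "length xs - 1"]) auto

lemma graph_dist_le:
  "reachable_within V E k u v \<Longrightarrow> graph_dist V E u v \<le> k"
  unfolding reachable_within_def graph_dist_def by (meson Least_le order_trans)

lemma graph_dist_ge_2:
  assumes "walk_of_len V E u v k" "u \<noteq> v" "\<not> E u v"
  shows "2 \<le> graph_dist V E u v"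
proof -
  have "walk_of_len V E u v (graph_dist V E u v)"
    unfolding graph_dist_def using assms(1) by (rule LeastI)
  then obtain xs where xs: "is_walk V E xs" "hd xs = u" "last xs = v"
    "length xs = Suc (graph_dist V E u v)"
    unfolding walk_of_len_def by blast
  have "length xs \<noteq> 1"
    using xs(2,3) assms(2) by (auto simp: length_Suc_conv)
  moreover have "length xs \<noteq> 2"
    using xs(1-3) assms(2,3) by (auto simp: length_Suc_conv numeral_2_eq_2 is_walk_Cons_Cons)
  ultimately show ?thesis
    using xs(4) by linarith
qed

lemma finite_graph_dists:
  "finite V \<Longrightarrow> finite {graph_dist V E u v | u v. u \<in> V \<and> v \<in> V}"
  by (rule finite_image_set2) auto

lemma graph_dist_le_diam:
  "finite V \<Longrightarrow> u \<in> V \<Longrightarrow> v \<in> V \<Longrightarrow> graph_dist V E u v \<le> graph_diam V E"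
  unfolding graph_diam_def by (rule Max_ge) (auto simp: finite_graph_dists)

lemma two_le_graph_diam:
  assumes "finite V" "graph_connected V E" "u \<in> V" "v \<in> V" "u \<noteq> v" "\<not> E u v"
  shows "2 \<le> graph_diam V E"
proof -
  obtain k where "walk_of_len V E u v k"
    using assms(2-4) unfolding graph_connected_def by blast
  then have "2 \<le> graph_dist V E u v"
    using assms(5,6) by (rule graph_dist_ge_2)
  also have "\<dots> \<le> graph_diam V E"
    using assms(1,3,4) by (rule graph_dist_le_diam)
  finally show ?thesis .
qed

lemma graph_diam_le:
  assumes "finite V" "V \<noteq> {}" "\<And>u v. u \<in> V \<Longrightarrow> v \<in> V \<Longrightarrow> reachable_within V E k u v"
  shows "graph_diam V E \<le> k"
proof -
  have "{graph_dist V E u v | u v. u \<in> V \<and> v \<in> V} \<noteq> {}"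
    using assms(2) by blast
  then show ?thesis
    unfolding graph_diam_def using assms(1,3)
    by (subst Max_le_iff) (auto simp: finite_graph_dists graph_dist_le)
qed

lemma graph_connected_if_reachable_within:
  "(\<And>u v. u \<in> V \<Longrightarrow> v \<in> V \<Longrightarrow> reachable_within V E k u v) \<Longrightarrow> graph_connected V E"
  unfolding graph_connected_def reachable_within_def by blast

lemma pair_in_seg_vertices [simp]: "{p, q} \<in> seg_vertices P \<longleftrightarrow> p \<in> P \<and> q \<in> P \<and> p \<noteq> q"
  unfolding seg_vertices_def by (auto simp: doubleton_eq_iff)

lemma finite_seg_vertices: "finite P \<Longrightarrow> finite (seg_vertices P)"
  by (rule finite_subset[of _ "Pow P"]) (auto simp: seg_vertices_def)

lemma seg_of_pair:
  assumes "a \<noteq> b"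
  shows "seg_of {a, b} = closed_segment a b"
proof -
  define s where "s = (SOME x. x \<in> {a, b})"
  define t where "t = (SOME y. y \<in> {a, b} \<and> y \<noteq> s)"
  have s: "s \<in> {a, b}"
    unfolding s_def by (rule someI[of _ a]) simp
  have "\<exists>y. y \<in> {a, b} \<and> y \<noteq> s"
    using s assms by auto
  then have t: "t \<in> {a, b} \<and> t \<noteq> s"
    unfolding t_def by (rule someI_ex)
  have "seg_of {a, b} = closed_segment s t"
    unfolding seg_of_def s_def t_def by simp
  then show ?thesis
    using s t by (auto simp: closed_segment_commute)
qed

lemma disj_adj_pair:
  "disj_adj P {p, q} {r, s} \<longleftrightarrow> p \<in> P \<and> q \<in> P \<and> r \<in> P \<and> s \<in> P \<and> p \<noteq> q \<and> r \<noteq> s \<and>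
     closed_segment p q \<inter> closed_segment r s = {}"
  unfolding disj_adj_def by (auto simp: seg_of_pair)

lemma disj_adj_if_separates:
  assumes "affine_fun L" "separates L p q r s" "{p, q, r, s} \<subseteq> P" "p \<noteq> q" "r \<noteq> s"
  shows "disj_adj P {p, q} {r, s}"
  using closed_segments_disjoint_if_separates[OF assms(1,2)] assms(3-5)
  by (auto simp: disj_adj_pair)

lemma not_disj_adj_common_endpoint: "\<not> disj_adj P {c, a} {c, b}"
  by (auto simp: disj_adj_def seg_of_pair)

lemma seg_vertices_common_endpoint:
  assumes "u \<in> seg_vertices P" "v \<in> seg_vertices P" "u \<noteq> v" "u \<inter> v \<noteq> {}"
  obtains c a b where "u = {c, a}" "v = {c, b}" "{c, a, b} \<subseteq> P" "distinct [c, a, b]"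
  using assms unfolding seg_vertices_def by (auto simp: insert_commute)

abbreviation D_within :: "(real^2) set \<Rightarrow> nat \<Rightarrow> (real^2) set \<Rightarrow> (real^2) set \<Rightarrow> bool" where
  "D_within P \<equiv> reachable_within (seg_vertices P) (disj_adj P)"

lemma pigeonhole_bool_pair:
  fixes f :: "'a \<Rightarrow> bool \<times> bool"
  assumes "finite R" "4 < card R"
  obtains x y where "x \<in> R" "y \<in> R" "x \<noteq> y" "f x = f y"
proof -
  have "card (f ` R) \<le> card (UNIV :: (bool \<times> bool) set)"
    by (rule card_mono) auto
  also have "\<dots> = 4"
    by (simp add: card_cartesian_product flip: UNIV_Times_UNIV)
  finally have "\<not> inj_on f R"
    using assms(2) by (intro pigeonhole) simp
  then show ?thesis
    using that unfolding inj_on_def by blast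
qed

lemma obtain_two_elements:
  assumes "2 \<le> card R"
  obtains x y where "x \<in> R" "y \<in> R" "x \<noteq> y"
  using obtain_subset_with_card_n[OF assms] by (metis card_2_iff insert_subset)

lemma obtain_three_elements:
  assumes "3 \<le> card R"
  obtains x y z where "x \<in> R" "y \<in> R" "z \<in> R" "distinct [x, y, z]"
  using obtain_subset_with_card_n[OF assms] by (metis card_3_iff distinct_length_2_or_more
      distinct_singleton insert_subset)

locale two_lines =
  fixes P :: "(real^2) set" and LE LF :: "real^2 \<Rightarrow> real"
  assumes affine_fun_LE: "affine_fun LE" and affine_fun_LF: "affine_fun LF"
begin

lemma disj_adj_if_separated:
  assumes "separates LE p q r s \<or> separates LF p q r s" "{p, q, r, s} \<subseteq> P" "p \<noteq> q" "r \<noteq> s"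
  shows "disj_adj P {p, q} {r, s}"
  using assms(1) disj_adj_if_separates[OF affine_fun_LE _ assms(2-4)]
    disj_adj_if_separates[OF affine_fun_LF _ assms(2-4)] by blast

end

locale crossing_segments = two_lines +
  fixes a1 a2 b1 b2 :: "real^2"
  assumes in_P: "a1 \<in> P" "a2 \<in> P" "b1 \<in> P" "b2 \<in> P"
    and LE_a: "LE a1 = 0" "LE a2 = 0" and LE_b: "LE b1 > 0" "LE b2 < 0"
    and LF_b: "LF b1 = 0" "LF b2 = 0" and LF_a: "LF a1 > 0" "LF a2 < 0"
begin

lemmas endpoints = in_P LE_a LE_b LF_a LF_b

lemma D_within_4_positive:
  assumes "x \<in> P" "LE x > 0" "LF x > 0"
  shows "D_within P 4 {a1, a2} {b1, b2}"
  by (rule reachable_within_walk[where xs = "[{a1, a2}, {b1, x}, {a2, b2}, {a1, x}, {b1, b2}]"])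
    (use assms endpoints in \<open>auto intro!: disj_adj_if_separated simp: is_walk_Cons_Cons separates_def\<close>)

lemma D_within_2_same_quadrant:
  assumes "x \<in> P" "y \<in> P" "x \<noteq> y" "LE x \<noteq> 0" "LF x \<noteq> 0" "LE y \<noteq> 0" "LF y \<noteq> 0"
    and "LE x > 0 \<longleftrightarrow> LE y > 0" "LF x > 0 \<longleftrightarrow> LF y > 0"
  shows "D_within P 2 {a1, a2} {b1, b2}"
  by (rule reachable_within_walk[where xs = "[{a1, a2}, {x, y}, {b1, b2}]"])
    (use assms endpoints in \<open>auto intro!: disj_adj_if_separated simp: is_walk_Cons_Cons separates_def\<close>)

lemma D_within_3_positive:
  assumes x: "x \<in> P" "LE x > 0" "LF x > 0" and y: "y \<in> P" "x \<noteq> y" "LE y \<noteq> 0" "LF y \<noteq> 0"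
  shows "D_within P 3 {a1, a2} {b1, b2}"
proof -
  consider "LE y > 0" "LF y > 0" | "LE y < 0" "LF y < 0" | "LE y > 0" "LF y < 0" | "LE y < 0" "LF y > 0"
    using y by linarith
  then show ?thesis
  proof cases
    case 1
    then show ?thesis
      using D_within_2_same_quadrant[of x y] x y reachable_within_mono by fastforce
  next
    case 2
    show ?thesis
      by (rule reachable_within_walk[where xs = "[{a1, a2}, {b1, x}, {a2, y}, {b1, b2}]"])
        (use 2 x y endpoints in \<open>auto intro!: disj_adj_if_separated simp: is_walk_Cons_Cons separates_def\<close>)
  next
    case 3
    show ?thesis
      by (rule reachable_within_walk[where xs = "[{a1, a2}, {b1, y}, {a1, x}, {b1, b2}]"])
        (use 3 x y endpoints in \<open>auto intro!: disj_adj_if_separated simp: is_walk_Cons_Cons separates_def\<close>)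
  next
    case 4
    show ?thesis
      by (rule reachable_within_walk[where xs = "[{a1, a2}, {b2, y}, {a1, x}, {b1, b2}]"])
        (use 4 x y endpoints in \<open>auto intro!: disj_adj_if_separated simp: is_walk_Cons_Cons separates_def\<close>)
  qed
qed

text \<open>Negating LE and swapping b1, b2 (or negating LF and swapping a1, a2) preserves the
  configuration, so any point off both lines can be moved into the positive quadrant.\<close>

lemma positive_quadrant_wlog:
  assumes "LE x \<noteq> 0" "LF x \<noteq> 0"
  obtains LE' LF' a1' a2' b1' b2' where "crossing_segments P LE' LF' a1' a2' b1' b2'"
    "{a1', a2'} = {a1, a2}" "{b1', b2'} = {b1, b2}"
    "\<And>z. \<bar>LE' z\<bar> = \<bar>LE z\<bar>" "\<And>z. \<bar>LF' z\<bar> = \<bar>LF z\<bar>" "LE' x > 0" "LF' x > 0"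
proof -
  have neg: "affine_fun (\<lambda>z. - LE z)" "affine_fun (\<lambda>z. - LF z)"
    using affine_fun_scale[of _ "-1"] affine_fun_LE affine_fun_LF by auto
  consider "LE x > 0" "LF x > 0" | "LE x < 0" "LF x > 0" | "LE x > 0" "LF x < 0" | "LE x < 0" "LF x < 0"
    using assms by linarith
  then show thesis
  proof cases
    case 1
    have "crossing_segments P LE LF a1 a2 b1 b2" ..
    then show thesis using 1 by (intro that[of LE LF a1 a2 b1 b2]) auto
  next
    case 2
    have "crossing_segments P (\<lambda>z. - LE z) LF a1 a2 b2 b1"
      by unfold_locales (use neg affine_fun_LF endpoints in auto)
    then show thesis using 2 by (intro that[of "\<lambda>z. - LE z" LF a1 a2 b2 b1]) (auto simp: insert_commute)
  next
    case 3
    have "crossing_segments P LE (\<lambda>z. - LF z) a2 a1 b1 b2"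
      by unfold_locales (use neg affine_fun_LE endpoints in auto)
    then show thesis using 3 by (intro that[of LE "\<lambda>z. - LF z" a2 a1 b1 b2]) (auto simp: insert_commute)
  next
    case 4
    have "crossing_segments P (\<lambda>z. - LE z) (\<lambda>z. - LF z) a2 a1 b2 b1"
      by unfold_locales (use neg endpoints in auto)
    then show thesis
      using 4 by (intro that[of "\<lambda>z. - LE z" "\<lambda>z. - LF z" a2 a1 b2 b1]) (auto simp: insert_commute)
  qed
qed

lemma D_within_4:
  assumes "x \<in> P" "LE x \<noteq> 0" "LF x \<noteq> 0"
  shows "D_within P 4 {a1, a2} {b1, b2}"
proof -
  obtain LE' LF' a1' a2' b1' b2' where c: "crossing_segments P LE' LF' a1' a2' b1' b2'"
    and "{a1', a2'} = {a1, a2}" "{b1', b2'} = {b1, b2}" "LE' x > 0" "LF' x > 0"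
    using positive_quadrant_wlog[OF assms(2,3)] by metis
  then show ?thesis
    using crossing_segments.D_within_4_positive[OF c assms(1)] by simp
qed

lemma D_within_3:
  assumes "x \<in> P" "y \<in> P" "x \<noteq> y" "LE x \<noteq> 0" "LF x \<noteq> 0" "LE y \<noteq> 0" "LF y \<noteq> 0"
  shows "D_within P 3 {a1, a2} {b1, b2}"
proof -
  obtain LE' LF' a1' a2' b1' b2' where c: "crossing_segments P LE' LF' a1' a2' b1' b2'"
    and "{a1', a2'} = {a1, a2}" "{b1', b2'} = {b1, b2}" "LE' x > 0" "LF' x > 0"
    and "LE' y \<noteq> 0" "LF' y \<noteq> 0"
    using positive_quadrant_wlog[OF assms(4,5)] assms(6,7) by (metis abs_eq_0)
  then show ?thesis
    using crossing_segments.D_within_3_positive[OF c assms(1) _ _ assms(2,3)] by simp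
qed

end

locale common_endpoint = two_lines +
  fixes c a b :: "real^2"
  assumes in_P: "c \<in> P" "a \<in> P" "b \<in> P"
    and LE_ca: "LE c = 0" "LE a = 0" and LE_b: "LE b > 0"
    and LF_cb: "LF c = 0" "LF b = 0" and LF_a: "LF a > 0"
begin

lemmas endpoints = in_P LE_ca LE_b LF_cb LF_a

lemma D_within_2:
  assumes "x \<in> P" "y \<in> P" "x \<noteq> y"
    and "LE x < 0 \<and> LE y < 0 \<or> LF x < 0 \<and> LF y < 0 \<or> LE x > 0 \<and> LF x > 0 \<and> LE y > 0 \<and> LF y > 0"
  shows "D_within P 2 {c, a} {c, b}"
  by (rule reachable_within_walk[where xs = "[{c, a}, {x, y}, {c, b}]"])
    (use assms endpoints in \<open>auto intro!: disj_adj_if_separated simp: is_walk_Cons_Cons separates_def\<close>)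

lemma D_within_3_LE:
  assumes "x \<in> P" "LE x < 0" "LF x > 0" "y \<in> P" "LE y > 0" "LF y \<noteq> 0"
  shows "D_within P 3 {c, a} {c, b}"
  by (rule reachable_within_walk[where xs = "[{c, a}, {y, b}, {x, a}, {c, b}]"])
    (use assms endpoints in \<open>auto intro!: disj_adj_if_separated simp: is_walk_Cons_Cons separates_def\<close>)

lemma D_within_3_LF:
  assumes "x \<in> P" "LF x < 0" "LE x > 0" "y \<in> P" "LF y > 0" "LE y \<noteq> 0"
  shows "D_within P 3 {c, a} {c, b}"
  by (rule reachable_within_walk[where xs = "[{c, a}, {x, b}, {y, a}, {c, b}]"])
    (use assms endpoints in \<open>auto intro!: disj_adj_if_separated simp: is_walk_Cons_Cons separates_def\<close>)

lemma D_within_4_opposite: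
  assumes "x \<in> P" "LE x < 0" "LF x < 0" "y \<in> P" "LE y > 0" "LF y > 0"
  shows "D_within P 4 {c, a} {c, b}"
  by (rule reachable_within_walk[where xs = "[{c, a}, {b, y}, {c, x}, {a, y}, {c, b}]"])
    (use assms endpoints in \<open>auto intro!: disj_adj_if_separated simp: is_walk_Cons_Cons separates_def\<close>)

lemma D_within_3:
  assumes "x \<in> P" "y \<in> P" "x \<noteq> y" "LE x \<noteq> 0" "LF x \<noteq> 0" "LE y \<noteq> 0" "LF y \<noteq> 0"
    and "\<not> (LE x < 0 \<and> LF x < 0 \<and> LE y > 0 \<and> LF y > 0)"
    and "\<not> (LE y < 0 \<and> LF y < 0 \<and> LE x > 0 \<and> LF x > 0)"
  shows "D_within P 3 {c, a} {c, b}"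
proof -
  have "D_within P 3 {c, a} {c, b}"
    if "LE x < 0 \<and> LE y < 0 \<or> LF x < 0 \<and> LF y < 0 \<or> LE x > 0 \<and> LF x > 0 \<and> LE y > 0 \<and> LF y > 0"
    using D_within_2[OF assms(1-3) that] reachable_within_mono by fastforce
  then show ?thesis
    using assms D_within_3_LE[of x y] D_within_3_LE[of y x] D_within_3_LF[of x y] D_within_3_LF[of y x]
    by (smt (verit))
qed

lemma D_within_4:
  assumes "x \<in> P" "y \<in> P" "x \<noteq> y" "LE x \<noteq> 0" "LF x \<noteq> 0" "LE y \<noteq> 0" "LF y \<noteq> 0"
  shows "D_within P 4 {c, a} {c, b}"
proof -
  have "D_within P 3 {c, a} {c, b} \<Longrightarrow> D_within P 4 {c, a} {c, b}"
    by (erule reachable_within_mono) simp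
  then show ?thesis
    using assms D_within_3[OF assms] D_within_4_opposite[of x y] D_within_4_opposite[of y x] by blast
qed

lemma D_within_2_same_quadrant:
  assumes "x \<in> P" "y \<in> P" "x \<noteq> y" "LE x \<noteq> 0" "LF x \<noteq> 0" "LE y \<noteq> 0" "LF y \<noteq> 0"
    and "LE x > 0 \<longleftrightarrow> LE y > 0" "LF x > 0 \<longleftrightarrow> LF y > 0"
  shows "D_within P 2 {c, a} {c, b}"
  using assms by (intro D_within_2) auto

end

definition dist_bound :: "nat \<Rightarrow> nat" where
  "dist_bound n = (if 9 \<le> n then 2 else if 6 \<le> n then 3 else 4)"

lemma D_within_crossing:
  assumes P: "finite P" "5 \<le> card P" "general_position P"
    and ab: "{a1, a2, b1, b2} \<subseteq> P" "distinct [a1, a2, b1, b2]"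
    and meet: "closed_segment a1 a2 \<inter> closed_segment b1 b2 \<noteq> {}"
  shows "D_within P (dist_bound (card P)) {a1, a2} {b1, b2}"
proof -
  define LE where "LE = side a1 a2 b1"
  define LF where "LF = side b1 b2 a1"
  define R where "R = P - {a1, a2, b1, b2}"
  have off_lines: "z \<in> P \<and> LE z \<noteq> 0 \<and> LF z \<noteq> 0" if "z \<in> R" for z
    unfolding LE_def LF_def
    by (intro conjI side_neq_0_if_general_position[OF P(3)]) (use that ab in \<open>auto simp: R_def\<close>)
  have LE_b1: "LE b1 > 0" and LF_a1: "LF a1 > 0"
    unfolding LE_def LF_def
    by (intro side_pos_if_general_position[OF P(3)]; use ab in auto)+
  have "LE b2 \<noteq> 0" "LF a2 \<noteq> 0"
    unfolding LE_def LF_def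
    by (intro side_neq_0_if_general_position[OF P(3)]; use ab in auto)+
  moreover have "\<not> separates LE a1 a2 b1 b2"
    using meet closed_segments_disjoint_if_separates[OF affine_fun_side] unfolding LE_def by blast
  moreover have "\<not> separates LF b1 b2 a1 a2"
    using meet closed_segments_disjoint_if_separates[OF affine_fun_side] unfolding LF_def by blast
  ultimately have "LE b2 < 0" "LF a2 < 0"
    using LE_b1 LF_a1 unfolding separates_def LE_def LF_def by auto
  then interpret crossing_segments P LE LF a1 a2 b1 b2
    using ab LE_b1 LF_a1 by unfold_locales (auto simp: LE_def LF_def affine_fun_side)
  have card_R: "card R = card P - 4"
    unfolding R_def using P(1) ab by (simp add: card_Diff_subset)
  have "D_within P 4 {a1, a2} {b1, b2}"
  proof -
    have "R \<noteq> {}"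
      using card_R P(2) by auto
    then obtain x where "x \<in> R"
      by blast
    then show ?thesis
      using D_within_4 off_lines by blast
  qed
  moreover have "D_within P 3 {a1, a2} {b1, b2}" if six: "6 \<le> card P"
  proof -
    have "2 \<le> card R"
      using card_R six by simp
    then obtain x y where "x \<in> R" "y \<in> R" "x \<noteq> y"
      by (rule obtain_two_elements)
    then show ?thesis
      using D_within_3 off_lines by blast
  qed
  moreover have "D_within P 2 {a1, a2} {b1, b2}" if nine: "9 \<le> card P"
  proof -
    have "finite R" "4 < card R"
      using P(1) card_R nine unfolding R_def by auto
    then obtain x y where xy: "x \<in> R" "y \<in> R" "x \<noteq> y"
      and "(LE x > 0, LF x > 0) = (LE y > 0, LF y > 0)"
      by (rule pigeonhole_bool_pair)
    then show ?thesis
      using off_lines[OF xy(1)] off_lines[OF xy(2)] by (intro D_within_2_same_quadrant[of x y]) auto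
  qed
  ultimately show ?thesis
    unfolding dist_bound_def by simp
qed

lemma D_within_common_endpoint:
  assumes P: "finite P" "5 \<le> card P" "general_position P"
    and cab: "{c, a, b} \<subseteq> P" "distinct [c, a, b]"
  shows "D_within P (dist_bound (card P)) {c, a} {c, b}"
proof -
  define LE where "LE = side c a b"
  define LF where "LF = side c b a"
  define R where "R = P - {c, a, b}"
  have off_lines: "z \<in> P \<and> LE z \<noteq> 0 \<and> LF z \<noteq> 0" if "z \<in> R" for z
    unfolding LE_def LF_def
    by (intro conjI side_neq_0_if_general_position[OF P(3)]) (use that cab in \<open>auto simp: R_def\<close>)
  have "LE b > 0" "LF a > 0"
    unfolding LE_def LF_def
    by (intro side_pos_if_general_position[OF P(3)]; use cab in auto)+
  then interpret common_endpoint P LE LF c a b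
    using cab by unfold_locales (auto simp: LE_def LF_def affine_fun_side)
  have card_R: "card R = card P - 3"
    unfolding R_def using P(1) cab by (simp add: card_Diff_subset)
  have "D_within P 4 {c, a} {c, b}"
  proof -
    have "2 \<le> card R"
      using card_R P(2) by simp
    then obtain x y where "x \<in> R" "y \<in> R" "x \<noteq> y"
      by (rule obtain_two_elements)
    then show ?thesis
      using D_within_4 off_lines by blast
  qed
  moreover have "D_within P 3 {c, a} {c, b}" if six: "6 \<le> card P"
  proof -
    have "3 \<le> card R"
      using card_R six by simp
    then obtain x y z where xyz: "x \<in> R" "y \<in> R" "z \<in> R" "distinct [x, y, z]"
      by (rule obtain_three_elements)
    have "\<not> (LE x < 0 \<and> LF x < 0 \<and> LE y > 0 \<and> LF y > 0) \<and> \<not> (LE y < 0 \<and> LF y < 0 \<and> LE x > 0 \<and> LF x > 0) \<or>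
      \<not> (LE x < 0 \<and> LF x < 0 \<and> LE z > 0 \<and> LF z > 0) \<and> \<not> (LE z < 0 \<and> LF z < 0 \<and> LE x > 0 \<and> LF x > 0) \<or>
      \<not> (LE y < 0 \<and> LF y < 0 \<and> LE z > 0 \<and> LF z > 0) \<and> \<not> (LE z < 0 \<and> LF z < 0 \<and> LE y > 0 \<and> LF y > 0)"
      by auto
    then show ?thesis
      using D_within_3 xyz off_lines by (metis distinct_length_2_or_more)
  qed
  moreover have "D_within P 2 {c, a} {c, b}" if nine: "9 \<le> card P"
  proof -
    have "finite R" "4 < card R"
      using P(1) card_R nine unfolding R_def by auto
    then obtain x y where xy: "x \<in> R" "y \<in> R" "x \<noteq> y"
      and "(LE x > 0, LF x > 0) = (LE y > 0, LF y > 0)"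
      by (rule pigeonhole_bool_pair)
    then show ?thesis
      using off_lines[OF xy(1)] off_lines[OF xy(2)] by (intro D_within_2_same_quadrant[of x y]) auto
  qed
  ultimately show ?thesis
    unfolding dist_bound_def by simp
qed

lemma D_within_dist_bound:
  assumes P: "finite P" "5 \<le> card P" "general_position P"
    and uv: "u \<in> seg_vertices P" "v \<in> seg_vertices P"
  shows "D_within P (dist_bound (card P)) u v"
proof -
  have bound: "1 \<le> dist_bound (card P)"
    by (simp add: dist_bound_def)
  consider "u = v" | "disj_adj P u v" | "u \<noteq> v" "u \<inter> v \<noteq> {}" | "u \<inter> v = {}" "\<not> disj_adj P u v"
    by blast
  then show ?thesis
  proof cases
    case 1
    then show ?thesis
      using uv by (intro reachable_within_walk[where xs = "[u]"]) auto
  next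
    case 2
    then show ?thesis
      using uv bound by (intro reachable_within_walk[where xs = "[u, v]"]) (auto simp: is_walk_Cons_Cons)
  next
    case 3
    obtain c a b where "u = {c, a}" "v = {c, b}" "{c, a, b} \<subseteq> P" "distinct [c, a, b]"
      by (rule seg_vertices_common_endpoint[OF uv 3])
    then show ?thesis
      using D_within_common_endpoint[OF P] by simp
  next
    case 4
    obtain a1 a2 b1 b2 where "u = {a1, a2}" "v = {b1, b2}" "{a1, a2} \<subseteq> P" "{b1, b2} \<subseteq> P"
      "a1 \<noteq> a2" "b1 \<noteq> b2"
      using uv unfolding seg_vertices_def by blast
    moreover from this have "closed_segment a1 a2 \<inter> closed_segment b1 b2 \<noteq> {}"
      using 4(2) by (simp add: disj_adj_pair)
    ultimately show ?thesis
      using D_within_crossing[OF P, of a1 a2 b1 b2] 4(1) by auto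
  qed
qed

theorem theorem1:
  fixes P :: "(real^2) set"
  assumes "finite P" and "card P \<ge> 5" and "general_position P"
  shows "graph_connected (seg_vertices P) (disj_adj P) \<and>
         (card P = 5 \<longrightarrow> diam_D P \<in> {2, 3, 4}) \<and>
         (card P \<in> {6, 7, 8} \<longrightarrow> diam_D P \<in> {2, 3}) \<and>
         (card P \<ge> 9 \<longrightarrow> diam_D P = 2)"
proof -
  have reach: "D_within P (dist_bound (card P)) u v"
    if "u \<in> seg_vertices P" "v \<in> seg_vertices P" for u v
    using D_within_dist_bound[OF assms that] .
  then have connected: "graph_connected (seg_vertices P) (disj_adj P)"
    by (rule graph_connected_if_reachable_within)
  have "3 \<le> card P"
    using assms(2) by simp
  then obtain p q r where "p \<in> P" "q \<in> P" "r \<in> P" "distinct [p, q, r]"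
    by (rule obtain_three_elements)
  then have pq: "{p, q} \<in> seg_vertices P" and pr: "{p, r} \<in> seg_vertices P"
    and "{p, q} \<noteq> {p, r}"
    by (auto simp: doubleton_eq_iff)
  have "2 \<le> diam_D P"
    using \<open>{p, q} \<noteq> {p, r}\<close> not_disj_adj_common_endpoint
    by (rule two_le_graph_diam[OF finite_seg_vertices[OF assms(1)] connected pq pr])
  moreover have "diam_D P \<le> dist_bound (card P)"
    using graph_diam_le[OF finite_seg_vertices[OF assms(1)] _ reach] pq by blast
  ultimately show ?thesis
    using connected by (auto simp: dist_bound_def)
qed

end
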